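(* Let $r,\alpha,p$ be nonnegative integers such that $r+1$ and $p$ are both prime. Then $(r+1)^{\alpha}p\in G_r$ if and only if for every nonnegative integer $t\le\alpha$ we have both $p\neq (r+1)^t+r$ and $(r+1)^t p+r$ is not prime.
   Context: For a positive integer $r$, the $r$-th Schemmel totient function $S_r:\mathbb{N}\to\mathbb{N}_0$ is the multiplicative arithmetic function (so $S_r(1)=1$ and $S_r(ab)=S_r(a)S_r(b)$ for coprime $a,b$) defined on prime powers by $S_r(p^{\alpha})=0$ if $p\le r$ and $S_r(p^\alpha)=p^{\alpha-1}(p-r)$ if $p>r$, for all primes $p$ and positive integers $\alpha$. $G_r$ denotes the set of positive integers not in the range of $S_r$ (Schemmel nontotient numbers of order $r$). *)

theory Defs
  imports "HOL-Computational_Algebra.Primes"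
begin

text \<open>Schemmel totient: multiplicative, with S_r(p^a) = 0 if p <= r and p^(a-1)(p-r) if p > r.
  Defined via the prime factorization of n (S_r 1 = 1 as the empty product).\<close>
definition schemmel :: "nat \<Rightarrow> nat \<Rightarrow> nat" where
  "schemmel r n = (\<Prod>p\<in>prime_factors n.
      (if p \<le> r then 0 else p ^ (multiplicity p n - 1) * (p - r)))"

definition G :: "nat \<Rightarrow> nat set" where
  "G r = {m. m > 0 \<and> \<not> (\<exists>n>0. schemmel r n = m)}"

end

theory Submission
  imports Defs
begin

text \<open>
  Write \<open>q = r + 1\<close>. If some \<open>t \<le> \<alpha>\<close> gives \<open>p = q^t + r\<close> or a prime \<open>s = q^t p + r\<close>,
  then \<open>p\<^sup>2 q^(\<alpha>-t+1)\<close>, respectively \<open>s q^(\<alpha>-t+1)\<close>, is mapped to \<open>q^\<alpha> p\<close>, since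
  \<open>S\<^sub>r(q^(k+1)) = q^k\<close>. Conversely, if \<open>S\<^sub>r(n) = q^\<alpha> p\<close>, the prime \<open>p\<close> divides the local factor
  \<open>s^(k-1) (s - r)\<close> of some prime power \<open>s^k\<close> exactly dividing \<open>n\<close>, and the cofactor divides
  \<open>q^\<alpha>\<close>, so it is a power of \<open>q\<close>. Either \<open>p = s\<close> and \<open>p - r = q^t\<close>, or \<open>s - r = q^t p\<close>.
  The case \<open>p = q\<close> (that is, \<open>t = 0\<close> in the first alternative) needs the witness \<open>q^(\<alpha>+2)\<close>
  instead, as \<open>p\<^sup>2 q^(\<alpha>+1)\<close> is then not a coprime product.
\<close>

lemma schemmel_prime_power:
  assumes "prime s" "k > 0"
  shows "schemmel r (s ^ k) = (if s \<le> r then 0 else s ^ (k - 1) * (s - r))"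
proof -
  have "prime_factors (s ^ k) = {s}"
    using assms by (simp add: prime_factorization_prime_power)
  moreover have "multiplicity s (s ^ k) = k"
    using assms by (simp add: prime_imp_prime_elem)
  ultimately show ?thesis
    unfolding schemmel_def by simp
qed

lemma multiplicity_mult_not_dvd_right:
  fixes a b p :: nat
  assumes "prime p" "\<not> p dvd b" "a \<noteq> 0" "b \<noteq> 0"
  shows "multiplicity p (a * b) = multiplicity p a"
  using assms
  by (simp add: prime_elem_multiplicity_mult_distrib prime_imp_prime_elem not_dvd_imp_multiplicity_0)

lemma schemmel_mult_coprime:
  assumes "coprime a b" "a > 0" "b > 0"
  shows "schemmel r (a * b) = schemmel r a * schemmel r b"
proof -
  define f where "f n p = (if p \<le> r then 0 else p ^ (multiplicity p n - 1) * (p - r))" for n p :: nat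
  have disjoint: "prime_factors a \<inter> prime_factors b = {}"
    using assms(1) by (auto dest: coprime_common_divisor_nat simp: in_prime_factors_iff)
  have "f (a * b) p = f a p" if "p \<in> prime_factors a" for p
  proof -
    have "\<not> p dvd b"
      using that disjoint assms by (auto simp: in_prime_factors_iff)
    then show ?thesis
      using that assms by (simp add: f_def in_prime_factors_iff multiplicity_mult_not_dvd_right)
  qed
  moreover have "f (a * b) p = f b p" if "p \<in> prime_factors b" for p
  proof -
    have "\<not> p dvd a"
      using that disjoint assms by (auto simp: in_prime_factors_iff)
    then show ?thesis
      using that assms
      by (simp add: f_def in_prime_factors_iff mult.commute[of a] multiplicity_mult_not_dvd_right)
  qed
  moreover have "prime_factors (a * b) = prime_factors a \<union> prime_factors b"
    using assms by (simp add: prime_factors_product)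
  ultimately show ?thesis
    unfolding schemmel_def f_def[symmetric] by (simp add: prod.union_disjoint disjoint cong: prod.cong)
qed

lemma schemmel_prime_power_mult_succ_power:
  fixes r s j k :: nat
  assumes "prime (r + 1)" "prime s" "r < s" "s \<noteq> r + 1"
  shows "schemmel r (s ^ (j + 1) * (r + 1) ^ (k + 1)) = s ^ j * (s - r) * (r + 1) ^ k"
proof -
  have "coprime (s ^ (j + 1)) ((r + 1) ^ (k + 1))"
    using primes_coprime[OF assms(2,1,4)]
    by (simp only: coprime_power_left_iff coprime_power_right_iff simp_thms)
  then have "schemmel r (s ^ (j + 1) * (r + 1) ^ (k + 1))
      = schemmel r (s ^ (j + 1)) * schemmel r ((r + 1) ^ (k + 1))"
    using assms by (intro schemmel_mult_coprime) (simp_all add: prime_gt_0_nat)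
  also have "\<dots> = s ^ j * (s - r) * (r + 1) ^ k"
    using assms schemmel_prime_power[OF assms(2), of "j + 1" r]
      schemmel_prime_power[OF assms(1), of "k + 1" r]
    by (simp del: power_Suc)
  finally show ?thesis .
qed

lemma schemmel_attains_prime_power_mult_prime:
  fixes r \<alpha> p t :: nat
  assumes q: "prime (r + 1)" and p: "prime p" and "t \<le> \<alpha>"
    and "p = (r + 1) ^ t + r \<or> prime ((r + 1) ^ t * p + r)"
  shows "\<exists>n>0. schemmel r n = (r + 1) ^ \<alpha> * p"
proof -
  have split_power: "(r + 1) ^ \<alpha> = (r + 1) ^ t * (r + 1) ^ (\<alpha> - t)"
    using \<open>t \<le> \<alpha>\<close> by (simp flip: power_add)
  have witness_pos: "s ^ j * (r + 1) ^ k > 0" if "prime s" for s j k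
    using that by (simp add: prime_gt_0_nat)
  consider "p = r + 1" | "p \<noteq> r + 1" "p = (r + 1) ^ t + r" | "prime ((r + 1) ^ t * p + r)"
    using assms(4) by blast
  then show ?thesis
  proof cases
    case 1
    then have "schemmel r ((r + 1) ^ (\<alpha> + 2)) = (r + 1) ^ \<alpha> * p"
      using schemmel_prime_power[OF q, of "\<alpha> + 2" r] by simp
    moreover have "(r + 1) ^ (\<alpha> + 2) > 0"
      by simp
    ultimately show ?thesis
      by blast
  next
    case 2
    have "schemmel r (p ^ (1 + 1) * (r + 1) ^ (\<alpha> - t + 1))
        = p ^ 1 * (p - r) * (r + 1) ^ (\<alpha> - t)"
      using 2 by (intro schemmel_prime_power_mult_succ_power[OF q p]) simp_all
    also have "\<dots> = (r + 1) ^ \<alpha> * p"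
      using 2 split_power by simp
    finally show ?thesis
      using witness_pos[OF p] by blast
  next
    case 3
    define s where "s = (r + 1) ^ t * p + r"
    have "(r + 1) ^ t * p \<ge> 1 * 2"
      using prime_ge_2_nat[OF p] by (intro mult_le_mono) simp_all
    then have "r < s" "s \<noteq> r + 1"
      unfolding s_def by linarith+
    then have "schemmel r (s ^ (0 + 1) * (r + 1) ^ (\<alpha> - t + 1))
        = s ^ 0 * (s - r) * (r + 1) ^ (\<alpha> - t)"
      by (intro schemmel_prime_power_mult_succ_power[OF q 3[folded s_def]])
    also have "\<dots> = (r + 1) ^ \<alpha> * p"
      using split_power by (simp add: s_def)
    finally show ?thesis
      using witness_pos[OF 3[folded s_def]] by blast
  qed
qed

lemma prime_dvd_schemmel_factor_cases:
  fixes p q r s j \<alpha> :: nat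
  assumes p: "prime p" and q: "prime q" and s: "prime s"
    and dvd_total: "s ^ j * (s - r) dvd q ^ \<alpha> * p" and p_dvd: "p dvd s ^ j * (s - r)"
  shows "\<exists>t\<le>\<alpha>. p = s \<and> s - r = q ^ t \<or> s - r = q ^ t * p"
proof -
  have cofactor_dvd: "x dvd q ^ \<alpha>" if "p * x dvd q ^ \<alpha> * p" for x
    using that p by (simp add: mult.commute[of _ p] prime_gt_0_nat)
  consider "p dvd s ^ j" | "p dvd s - r"
    using p_dvd p by (auto simp: prime_dvd_mult_iff)
  then show ?thesis
  proof cases
    case 1
    then have "p = s"
      using p s by (meson prime_dvd_power primes_dvd_imp_eq)
    moreover obtain i where "j = Suc i"
      using 1 p by (cases j) auto
    ultimately have "p * (p ^ i * (s - r)) dvd q ^ \<alpha> * p"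
      using dvd_total by (simp add: mult.assoc)
    then have "s - r dvd q ^ \<alpha>"
      by (rule dvd_mult_right[OF cofactor_dvd])
    then obtain t where "t \<le> \<alpha>" "s - r = q ^ t"
      using divides_primepow_nat[OF q] by blast
    with \<open>p = s\<close> show ?thesis
      by blast
  next
    case 2
    then obtain c where c: "s - r = p * c" ..
    then have "p * (s ^ j * c) dvd q ^ \<alpha> * p"
      using dvd_total by (simp add: ac_simps)
    then have "c dvd q ^ \<alpha>"
      by (rule dvd_mult_right[OF cofactor_dvd])
    then obtain t where "t \<le> \<alpha>" "c = q ^ t"
      using divides_primepow_nat[OF q] by blast
    with c show ?thesis
      by (auto simp: mult.commute)
  qed
qed

lemma schemmel_eq_prime_power_mult_primeD:
  fixes r \<alpha> p n :: nat
  assumes q: "prime (r + 1)" and p: "prime p" and eq: "schemmel r n = (r + 1) ^ \<alpha> * p"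
  shows "\<exists>t\<le>\<alpha>. p = (r + 1) ^ t + r \<or> prime ((r + 1) ^ t * p + r)"
proof -
  define f where "f s = (if s \<le> r then 0 else s ^ (multiplicity s n - 1) * (s - r))" for s
  have prod_eq: "(\<Prod>s\<in>prime_factors n. f s) = (r + 1) ^ \<alpha> * p"
    using eq unfolding schemmel_def f_def .
  then obtain s where s: "s \<in> prime_factors n" and "p dvd f s"
    using p by (metis dvd_triv_right finite_set_mset prime_dvd_prod_iff)
  have "f s dvd (r + 1) ^ \<alpha> * p"
    using s by (metis dvd_prodI finite_set_mset prod_eq)
  moreover have "(r + 1) ^ \<alpha> * p \<noteq> 0"
    using p by (simp add: prime_gt_0_nat)
  ultimately have "r < s"
    by (auto simp: f_def split: if_splits)
  have "prime s"
    using s by (simp add: in_prime_factors_iff)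
  moreover have "f s = s ^ (multiplicity s n - 1) * (s - r)"
    using \<open>r < s\<close> by (simp add: f_def)
  ultimately have "s ^ (multiplicity s n - 1) * (s - r) dvd (r + 1) ^ \<alpha> * p"
      "p dvd s ^ (multiplicity s n - 1) * (s - r)"
    using \<open>f s dvd (r + 1) ^ \<alpha> * p\<close> \<open>p dvd f s\<close> by simp_all
  from prime_dvd_schemmel_factor_cases[OF p q \<open>prime s\<close> this]
  obtain t where "t \<le> \<alpha>" "p = s \<and> s - r = (r + 1) ^ t \<or> s - r = (r + 1) ^ t * p"
    by blast
  then have "p = (r + 1) ^ t + r \<or> s = (r + 1) ^ t * p + r"
    using \<open>r < s\<close> by auto
  then show ?thesis
    using \<open>t \<le> \<alpha>\<close> \<open>prime s\<close> by auto
qed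

theorem lemma2p2:
  fixes r \<alpha> p :: nat
  assumes "prime (r + 1)" and "prime p"
  shows "(r + 1) ^ \<alpha> * p \<in> G r \<longleftrightarrow>
    (\<forall>t \<le> \<alpha>. p \<noteq> (r + 1) ^ t + r \<and> \<not> prime ((r + 1) ^ t * p + r))"
proof -
  have attained: "(\<exists>n>0. schemmel r n = (r + 1) ^ \<alpha> * p) \<longleftrightarrow>
      (\<exists>t\<le>\<alpha>. p = (r + 1) ^ t + r \<or> prime ((r + 1) ^ t * p + r))"
  proof
    assume "\<exists>n>0. schemmel r n = (r + 1) ^ \<alpha> * p"
    then show "\<exists>t\<le>\<alpha>. p = (r + 1) ^ t + r \<or> prime ((r + 1) ^ t * p + r)"
      using schemmel_eq_prime_power_mult_primeD[OF assms] by blast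
  next
    assume "\<exists>t\<le>\<alpha>. p = (r + 1) ^ t + r \<or> prime ((r + 1) ^ t * p + r)"
    then show "\<exists>n>0. schemmel r n = (r + 1) ^ \<alpha> * p"
      using schemmel_attains_prime_power_mult_prime[OF assms] by blast
  qed
  have "(r + 1) ^ \<alpha> * p > 0"
    using assms(2) by (simp add: prime_gt_0_nat)
  then have "(r + 1) ^ \<alpha> * p \<in> G r \<longleftrightarrow> \<not> (\<exists>n>0. schemmel r n = (r + 1) ^ \<alpha> * p)"
    unfolding G_def by blast
  also have "\<dots> \<longleftrightarrow> \<not> (\<exists>t\<le>\<alpha>. p = (r + 1) ^ t + r \<or> prime ((r + 1) ^ t * p + r))"
    by (simp only: attained)
  finally show ?thesis
    by blast
qed

end
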